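(* Let $V$ be a finite alphabet of tokens containing an end-of-sequence token, $x$ a prompt, and $p^{(1)},p^{(2)}$ two language models. Let $p$ be the fused model defined iteratively by $$p(\cdot\mid y_{<t},x)=\arg\min_{p^*}\max_{i\in\{1,2\}}\ \mathbb{E}_{y_t\sim p^*}\log\frac{p^*(y_t)\,p(y_{<t}\mid x)}{p^{(i)}(y_{\le t}\mid x)},$$ where $p^*$ ranges over probability distributions on $V$ and $p(y_{<t}\mid x)=\prod_{s<t}p(y_s\mid y_{<s},x)$. Let $y_{<t}$ be any non-ending sequence (containing no end-of-sequence token), and assume that $p^{(i)}(\cdot\mid y_{<t},x)$ has full support on $V$ for both $i\in\{1,2\}$ and that $p^{(1)}(y_{<t}\mid x)>p^{(2)}(y_{<t}\mid x)$. Then at least one of the following holds: 1. $\mathbb{E}_{y_t\sim p(\cdot\mid y_{<t},x)}\log p^{(1)}(y_{\le t}\mid x)=\mathbb{E}_{y_t\sim p(\cdot\mid y_{<t},x)}\log p^{(2)}(y_{\le t}\mid x)$; 2. $p(y_t\mid y_{<t},x)=p^{(2)}(y_t\mid y_{<t},x)$ for all $y_t\in V$.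
   Context: A language model $p$ maps a prompt $x$ to a distribution over token sequences $y_{0:T}$ over a finite alphabet $V$ (with $y_T$ the end-of-sequence token), factorized as $p(y_{0:T}\mid x)=\prod_{t=0}^T p(y_t\mid y_{<t},x)$ with $y_{<0}=\emptyset$; for a prefix, $p^{(i)}(y_{\le t}\mid x)=\prod_{s\le t}p^{(i)}(y_s\mid y_{<s},x)$. The minimization defining $p(\cdot\mid y_{<t},x)$ is equivalent to minimizing $s$ over $(p^*,s)$ subject to $\mathrm{KL}(p^*\|p^{(i)}(\cdot\mid y_{<t},x))+\log\frac{p(y_{<t}\mid x)}{p^{(i)}(y_{<t}\mid x)}\le s$ for $i=1,2$, where $\mathrm{KL}$ is the Kullback–Leibler divergence. *)

theory Defs
  imports Complex_Main
begin

text \<open>Tokens form a finite type 'v.  A (conditional) language model is a function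
  m x ys y = m(y | ys, x): prompt x, prefix ys (a token list), next token y.\<close>

definition is_distribution :: "('v::finite \<Rightarrow> real) \<Rightarrow> bool" where
  "is_distribution q \<longleftrightarrow> (\<forall>y. 0 \<le> q y) \<and> (\<Sum>y\<in>UNIV. q y) = 1"

definition language_model :: "('x \<Rightarrow> 'v list \<Rightarrow> 'v::finite \<Rightarrow> real) \<Rightarrow> bool" where
  "language_model m \<longleftrightarrow> (\<forall>x ys. is_distribution (m x ys))"

definition prefix_prob :: "('x \<Rightarrow> 'v list \<Rightarrow> 'v \<Rightarrow> real) \<Rightarrow> 'x \<Rightarrow> 'v list \<Rightarrow> real" where
  "prefix_prob m x ys = (\<Prod>s<length ys. m x (take s ys) (ys ! s))"

text \<open>Kullback--Leibler divergence (with the convention 0 log 0 = 0).\<close>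
definition KL :: "('v::finite \<Rightarrow> real) \<Rightarrow> ('v \<Rightarrow> real) \<Rightarrow> real" where
  "KL q r = (\<Sum>y\<in>UNIV. q y * ln (q y / r y))"

text \<open>Objective of the fused model at prefix ys for a candidate next-token distribution q:
  max_i [ E_{y~q} log (q(y) p(ys|x) / p_i(ys @ [y] | x)) ]
  written as max_i [ KL(q || p_i(.|ys,x)) + log p(ys|x) - log p_i(ys|x) ].\<close>
definition fused_obj ::
  "('x \<Rightarrow> 'v list \<Rightarrow> 'v::finite \<Rightarrow> real) \<Rightarrow> ('x \<Rightarrow> 'v list \<Rightarrow> 'v \<Rightarrow> real) \<Rightarrow>
   ('x \<Rightarrow> 'v list \<Rightarrow> 'v \<Rightarrow> real) \<Rightarrow> 'x \<Rightarrow> 'v list \<Rightarrow> ('v \<Rightarrow> real) \<Rightarrow> real" where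
  "fused_obj p p1 p2 x ys q =
     max (KL q (p1 x ys) + ln (prefix_prob p x ys) - ln (prefix_prob p1 x ys))
         (KL q (p2 x ys) + ln (prefix_prob p x ys) - ln (prefix_prob p2 x ys))"

end

theory Submission
  imports Defs
begin

text \<open>Write the fused objective as c + max (f_1 q) (f_2 q) with
  f_i q = KL(q || p_i(.|y<t,x)) - log p_i(y<t|x), two convex functions of q.
  At a minimiser q with f_1 q \<noteq> f_2 q, a small step from q towards p_i(.|y<t,x),
  for the larger term f_i, would lower f_i without letting the other term overtake it;
  so KL(q || p_i(.|y<t,x)) = 0 and, by Gibbs' inequality, q = p_i(.|y<t,x).  For i = 1 this
  is impossible, since then f_1 q = -log p_1(y<t|x) < -log p_2(y<t|x) \<le> f_2 q.
  Hence either q = p_2(.|y<t,x), or f_1 q = f_2 q, which is the equality of the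
  two expected log-likelihoods.\<close>

lemma mult_ln_div_ge:
  fixes u m s :: real
  assumes u: "0 \<le> u" and m: "0 < m" and s: "0 < s"
  shows "u * ln (m / s) + u - m \<le> u * ln (u / s)"
proof (cases "u = 0")
  case True
  then show ?thesis using m by simp
next
  case False
  with u have u: "0 < u" by simp
  have "u * ln (m / u) \<le> u * (m / u - 1)"
    using ln_le_minus_one[of "m / u"] u m by (simp add: mult_left_mono)
  also have "\<dots> = m - u" using u by (simp add: field_simps)
  finally show ?thesis using u m s by (simp add: ln_div algebra_simps)
qed

lemma mult_ln_div_ge_diff:
  fixes u r :: real
  assumes "0 \<le> u" and "0 < r"
  shows "u - r \<le> u * ln (u / r)"
  using mult_ln_div_ge[of u r r] assms by simp

lemma mult_ln_div_eq_diff_imp_eq: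
  fixes u r :: real
  assumes u: "0 \<le> u" and r: "0 < r" and eq: "u * ln (u / r) = u - r"
  shows "u = r"
proof -
  have "u \<noteq> 0" using eq r by auto
  with u have u: "0 < u" by simp
  have "u * ln (r / u) = r - u" using eq u r by (simp add: ln_div algebra_simps)
  then have "ln (r / u) = r / u - 1" using u by (simp add: field_simps)
  then have "r / u = 1" using ln_eq_minus_one[of "r / u"] u r by simp
  then show ?thesis using u by simp
qed

lemma KL_convex:
  fixes a b s :: "'v::finite \<Rightarrow> real" and t :: real
  assumes a: "\<forall>y. 0 \<le> a y" and b: "\<forall>y. 0 \<le> b y" and s: "\<forall>y. 0 < s y"
    and t: "0 \<le> t" "t \<le> 1" and mix_pos: "\<forall>y. 0 < (1 - t) * a y + t * b y"
  shows "KL (\<lambda>y. (1 - t) * a y + t * b y) s \<le> (1 - t) * KL a s + t * KL b s"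
proof -
  have "M * ln (M / s y) \<le> (1 - t) * (a y * ln (a y / s y)) + t * (b y * ln (b y / s y))"
    if M: "M = (1 - t) * a y + t * b y" for M y
  proof -
    \<comment> \<open>Average the tangent-line bounds at M of the convex map u \<mapsto> u ln (u / s y).\<close>
    have "M * ln (M / s y)
        = (1 - t) * (a y * ln (M / s y) + a y - M) + t * (b y * ln (M / s y) + b y - M)"
      unfolding M by (simp add: algebra_simps)
    also have "\<dots> \<le> (1 - t) * (a y * ln (a y / s y)) + t * (b y * ln (b y / s y))"
      using mult_ln_div_ge[of "a y" M "s y"] mult_ln_div_ge[of "b y" M "s y"] a b s t mix_pos M
      by (intro add_mono mult_left_mono) auto
    finally show ?thesis .
  qed
  then have "KL (\<lambda>y. (1 - t) * a y + t * b y) s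
      \<le> (\<Sum>y\<in>UNIV. (1 - t) * (a y * ln (a y / s y)) + t * (b y * ln (b y / s y)))"
    unfolding KL_def by (intro sum_mono) auto
  also have "\<dots> = (1 - t) * KL a s + t * KL b s"
    unfolding KL_def by (simp add: sum.distrib sum_distrib_left)
  finally show ?thesis .
qed

lemma KL_eq_sum_gap:
  assumes q: "is_distribution q" and r: "is_distribution r"
  shows "KL q r = (\<Sum>y\<in>UNIV. q y * ln (q y / r y) - (q y - r y))"
  using q r unfolding KL_def is_distribution_def by (simp add: sum_subtractf)

lemma KL_nonneg:
  assumes q: "is_distribution q" and r: "is_distribution r" and r_pos: "\<forall>y. 0 < r y"
  shows "0 \<le> KL q r"
  unfolding KL_eq_sum_gap[OF q r]
  using mult_ln_div_ge_diff q r_pos by (intro sum_nonneg) (auto simp: is_distribution_def)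

lemma KL_eq_0_iff:
  assumes q: "is_distribution q" and r: "is_distribution r" and r_pos: "\<forall>y. 0 < r y"
  shows "KL q r = 0 \<longleftrightarrow> q = r"
proof
  assume KL0: "KL q r = 0"
  have "\<forall>y. 0 \<le> q y * ln (q y / r y) - (q y - r y)"
    using mult_ln_div_ge_diff q r_pos by (auto simp: is_distribution_def)
  then have "\<forall>y. q y * ln (q y / r y) - (q y - r y) = 0"
    using KL0 KL_eq_sum_gap[OF q r]
      sum_nonneg_eq_0_iff[of UNIV "\<lambda>y. q y * ln (q y / r y) - (q y - r y)"] by simp
  then have "\<forall>y. q y * ln (q y / r y) = q y - r y" by simp
  then show "q = r"
    using mult_ln_div_eq_diff_imp_eq q r_pos by (auto simp: is_distribution_def)
next
  assume "q = r"
  then show "KL q r = 0" using r_pos by (simp add: KL_def less_imp_neq[symmetric])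
qed

lemma is_distribution_mix:
  assumes q: "is_distribution q" and r: "is_distribution r" and t: "0 \<le> t" "t \<le> 1"
  shows "is_distribution (\<lambda>y. (1 - t) * q y + t * r y)"
  using q r t unfolding is_distribution_def
  by (simp add: sum.distrib sum_distrib_left[symmetric])

lemma max_descent_along_segment:
  fixes g1 g2 :: "real \<Rightarrow> real"
  assumes chord1: "\<And>t. 0 < t \<Longrightarrow> t \<le> 1 \<Longrightarrow> g1 t \<le> (1 - t) * g1 0 + t * g1 1"
    and chord2: "\<And>t. 0 < t \<Longrightarrow> t \<le> 1 \<Longrightarrow> g2 t \<le> (1 - t) * g2 0 + t * g2 1"
    and dominant: "g2 0 < g1 0" and decrease: "g1 1 < g1 0"
  shows "\<exists>t. 0 < t \<and> t \<le> 1 \<and> max (g1 t) (g2 t) < max (g1 0) (g2 0)"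
proof -
  define D where "D = g1 0 - g2 0"
  define K where "K = g2 1 - g2 0"
  \<comment> \<open>Small enough that the growth t * K of g2 stays below the initial gap D.\<close>
  define t where "t = D / (2 * (D + \<bar>K\<bar>))"
  have D: "0 < D" using dominant by (simp add: D_def)
  have t_pos: "0 < t" and t_le: "t \<le> 1" using D by (auto simp: t_def field_simps)
  have "t * K \<le> t * \<bar>K\<bar>" using t_pos by (simp add: mult_left_mono)
  also have "\<dots> \<le> D / 2" using D by (simp add: t_def field_simps mult_left_mono)
  finally have tK: "t * K < D" using D by simp
  have "t * g1 1 < t * g1 0" using decrease t_pos by simp
  then have "g1 t < g1 0" using chord1[OF t_pos t_le] by (simp add: algebra_simps)
  moreover have "g2 t < g1 0"
    using chord2[OF t_pos t_le] tK by (simp add: D_def K_def algebra_simps)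
  ultimately show ?thesis using t_pos t_le dominant by auto
qed

lemma is_arg_min_max_KL_dominant_eq:
  fixes q s1 s2 :: "'v::finite \<Rightarrow> real" and b1 b2 :: real
  assumes min: "is_arg_min (\<lambda>q. max (KL q s1 - b1) (KL q s2 - b2)) is_distribution q"
    and s1: "is_distribution s1" and s1_pos: "\<forall>y. 0 < s1 y" and s2_pos: "\<forall>y. 0 < s2 y"
    and dominant: "KL q s2 - b2 < KL q s1 - b1"
  shows "q = s1"
proof (rule ccontr)
  assume "q \<noteq> s1"
  have q: "is_distribution q" using min by (simp add: is_arg_min_def)
  have "0 < KL q s1"
    using KL_nonneg[OF q s1 s1_pos] KL_eq_0_iff[OF q s1 s1_pos] \<open>q \<noteq> s1\<close> by simp
  define mix where "mix t = (\<lambda>y. (1 - t) * q y + t * s1 y)" for t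
  have mix_endpoints: "mix 0 = q" "mix 1 = s1" by (simp_all add: mix_def)
  have mix_pos: "\<forall>y. 0 < (1 - t) * q y + t * s1 y" if "0 < t" "t \<le> 1" for t
    using q s1_pos that by (auto simp: is_distribution_def intro: add_nonneg_pos)
  have chord: "KL (mix t) s \<le> (1 - t) * KL (mix 0) s + t * KL (mix 1) s"
    if "0 < t" "t \<le> 1" "\<forall>y. 0 < s y" for t s
    unfolding mix_endpoints unfolding mix_def
    using KL_convex[of q s1 s t] q s1 mix_pos that by (simp add: is_distribution_def)
  obtain t where t: "0 < t" "t \<le> 1"
    and "max (KL (mix t) s1 - b1) (KL (mix t) s2 - b2) < max (KL q s1 - b1) (KL q s2 - b2)"
    using max_descent_along_segment[of "\<lambda>t. KL (mix t) s1 - b1" "\<lambda>t. KL (mix t) s2 - b2"]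
      chord[OF _ _ s1_pos] chord[OF _ _ s2_pos] dominant \<open>0 < KL q s1\<close> KL_eq_0_iff[OF s1 s1 s1_pos]
    unfolding mix_endpoints by (fastforce simp: algebra_simps)
  moreover have "is_distribution (mix t)"
    unfolding mix_def using is_distribution_mix[OF q s1] t by simp
  ultimately show False using min by (auto simp: is_arg_min_def)
qed

lemma expected_ln_scaled_eq:
  assumes q: "is_distribution q" and r_pos: "\<forall>y. 0 < r y" and P: "0 < P"
  shows "(\<Sum>y\<in>UNIV. q y * ln (P * r y)) = ln P + (\<Sum>y\<in>UNIV. q y * ln (q y)) - KL q r"
proof -
  have "q y * ln (P * r y) = q y * ln P + q y * ln (q y) - q y * ln (q y / r y)" for y
  proof -
    have "0 < r y" "0 \<le> q y" using q r_pos by (auto simp: is_distribution_def)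
    then show ?thesis
      using P by (cases "q y = 0") (auto simp: ln_mult ln_div algebra_simps)
  qed
  then show ?thesis
    using q unfolding KL_def is_distribution_def
    by (simp add: sum.distrib sum_subtractf sum_distrib_right[symmetric])
qed

theorem lemma4p2:
  fixes p p1 p2 :: "'x \<Rightarrow> 'v::finite list \<Rightarrow> 'v \<Rightarrow> real"
    and eos :: 'v and x :: 'x and ys :: "'v list"
  assumes lm1: "language_model p1" and lm2: "language_model p2"
    and lm: "language_model p"
    and fused: "is_arg_min (fused_obj p p1 p2 x ys) is_distribution (p x ys)"
    and nonend: "eos \<notin> set ys"
    and supp1: "\<forall>y. p1 x ys y > 0" and supp2: "\<forall>y. p2 x ys y > 0"
    and pos2: "prefix_prob p2 x ys > 0"
    and gt: "prefix_prob p1 x ys > prefix_prob p2 x ys"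
  shows "(\<Sum>y\<in>UNIV. p x ys y * ln (prefix_prob p1 x ys * p1 x ys y))
           = (\<Sum>y\<in>UNIV. p x ys y * ln (prefix_prob p2 x ys * p2 x ys y))
         \<or> (\<forall>y. p x ys y = p2 x ys y)"
proof -
  define q r1 r2 P1 P2 where "q = p x ys" and "r1 = p1 x ys" and "r2 = p2 x ys"
    and "P1 = prefix_prob p1 x ys" and "P2 = prefix_prob p2 x ys"
  note defs = q_def r1_def r2_def P1_def P2_def
  have r1: "is_distribution r1" and r2: "is_distribution r2"
    using lm1 lm2 by (simp_all add: defs language_model_def)
  have P2: "0 < P2" and P1: "0 < P1" and ln_P: "ln P2 < ln P1"
    using pos2 gt by (simp_all add: defs)
  have "fused_obj p p1 p2 x ys q' = max (KL q' r1 - ln P1) (KL q' r2 - ln P2) + ln (prefix_prob p x ys)"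
    for q' unfolding fused_obj_def defs max_add_distrib_left by (simp add: algebra_simps)
  then have min: "is_arg_min (\<lambda>q. max (KL q r1 - ln P1) (KL q r2 - ln P2)) is_distribution q"
    using fused by (simp add: is_arg_min_def q_def)
  then have q: "is_distribution q" by (simp add: is_arg_min_def)
  consider "KL q r1 - ln P1 = KL q r2 - ln P2" | "KL q r2 - ln P2 < KL q r1 - ln P1"
    | "KL q r1 - ln P1 < KL q r2 - ln P2" by linarith
  then show ?thesis
  proof cases
    case 1
    then show ?thesis
      using expected_ln_scaled_eq[OF q _ P1, of r1] expected_ln_scaled_eq[OF q _ P2, of r2]
        supp1 supp2 by (simp add: defs)
  next
    case 2
    then have "q = r1" using is_arg_min_max_KL_dominant_eq[OF min r1] supp1 supp2 by (simp add: defs)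
    then show ?thesis
      using 2 ln_P KL_eq_0_iff[OF r1 r1] KL_nonneg[OF r1 r2] supp1 supp2 by (simp add: defs)
  next
    case 3
    from min have "is_arg_min (\<lambda>q. max (KL q r2 - ln P2) (KL q r1 - ln P1)) is_distribution q"
      by (simp add: max.commute)
    then have "q = r2" using is_arg_min_max_KL_dominant_eq[OF _ r2] 3 supp1 supp2 by (simp add: defs)
    then show ?thesis by (simp add: defs)
  qed
qed

end
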